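(* Let $F_0,F_1$ be an affine pair of communicating SR-machines, and for $j=0,1$ let $k_j=|K_j|$ be the number of states of $F_j$. If there is a reachable global state $((p_0,p_1),(x_\alpha,\lambda))$ with $|x_\alpha|\ge k_0(k_1-1)+1$, then $F_1$ has a receive cycle and $F_0$ has a send cycle.
   Context: A pair of communicating SR-machines is a CFSM protocol with communication graph having nodes $\{0,1\}$ and two edges $\alpha$ (from $0$ to $1$) and $\beta$ (from $1$ to $0$), disjoint finite message alphabets $M_\alpha,M_\beta$, and two finite state machines $F_j=(K_j,\Sigma_j,T_j,h_j)$, $j=0,1$, with $\Sigma_0=\{-b:b\in M_\alpha\}\cup\{+b:b\in M_\beta\}$, $\Sigma_1=\{-b:b\in M_\beta\}\cup\{+b:b\in M_\alpha\}$, $K_j$ finite, $h_j\in K_j$ initial, $T_j\subseteq K_j\times\Sigma_j\times K_j$ (transitions written $p\xrightarrow{e}q$; $+b$ = receive, $-b$ = send; $p\xrightarrow{w}q$ for $w\in\Sigma_j^*$ means a directed path labelled $w$). A state is a send state if it has no outgoing $+b$ transition and a receive state if it has no outgoing $-b$ transition. $F_j$ is an SR-machine if every state is a send or a receive state, its transition diagram is strongly connected, and $p\xrightarrow{e}q_1$, $p\xrightarrow{e}q_2$ imply $q_1=q_2$. Global states are $((p_0,p_1),(x_\alpha,x_\beta))$ with $p_j\in K_j$, $x_\alpha\in M_\alpha^*$, $x_\beta\in M_\beta^*$; initially $((h_0,h_1),(\lambda,\lambda))$. A step is either a send: a machine performs $p\xrightarrow{-b}q$ and $b$ is appended to the end of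 the channel on which it sends ($\alpha$ for $F_0$, $\beta$ for $F_1$), or a receive: a machine performs $p\xrightarrow{+b}q$ and $b$ is removed from the front of its input channel ($\beta$ for $F_0$, $\alpha$ for $F_1$), which must begin with $b$; the other machine's state is unchanged. Reachable means reachable from the initial global state by finitely many steps. For $w\in\Sigma_0^*\cup\Sigma_1^*$, $\pi_\alpha(w)\in M_\alpha^*$ (resp. $\pi_\beta(w)\in M_\beta^*$) is the string of message symbols from $M_\alpha$ (resp. $M_\beta$) occurring in $w$, in order, with signs removed. Let $\mathbf Z_j=\{(\pi_\alpha(w),\pi_\beta(w)): h_j\xrightarrow{w}h_j \text{ in } F_j\}$; the pair is affine if $\mathbf Z_0=\mathbf Z_1$. A send cycle (resp. receive cycle) of $F_j$ is a directed cycle in its transition diagram all of whose labels are of the form $-b$ (resp. $+b$). *)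

theory Defs
  imports Main
begin

text \<open>Events: Snd b is the label -b (send), Rcv b is the label +b (receive).\<close>
datatype 'm act = Snd 'm | Rcv 'm

fun msg :: "'m act \<Rightarrow> 'm" where
  "msg (Snd b) = b" | "msg (Rcv b) = b"

fun is_send :: "'m act \<Rightarrow> bool" where
  "is_send (Snd _) = True" | "is_send (Rcv _) = False"

fun is_recv :: "'m act \<Rightarrow> bool" where
  "is_recv (Snd _) = False" | "is_recv (Rcv _) = True"

definition alphabet :: "'m set \<Rightarrow> 'm set \<Rightarrow> 'm act set" where
  "alphabet Moutp Minp = Snd ` Moutp \<union> Rcv ` Minp"

inductive path :: "('s \<times> 'm act \<times> 's) set \<Rightarrow> 's \<Rightarrow> 'm act list \<Rightarrow> 's \<Rightarrow> bool"
  for T where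
  path_nil: "path T p [] p"
| path_cons: "(p, e, q) \<in> T \<Longrightarrow> path T q w r \<Longrightarrow> path T p (e # w) r"

definition send_state :: "('s \<times> 'm act \<times> 's) set \<Rightarrow> 's \<Rightarrow> bool" where
  "send_state T p \<longleftrightarrow> (\<forall>b q. (p, Rcv b, q) \<notin> T)"

definition receive_state :: "('s \<times> 'm act \<times> 's) set \<Rightarrow> 's \<Rightarrow> bool" where
  "receive_state T p \<longleftrightarrow> (\<forall>b q. (p, Snd b, q) \<notin> T)"

definition sr_machine ::
  "'m set \<Rightarrow> 'm set \<Rightarrow> 's set \<Rightarrow> ('s \<times> 'm act \<times> 's) set \<Rightarrow> 's \<Rightarrow> bool" where
  "sr_machine Moutp Minp K T h \<longleftrightarrow>
     finite K \<and> h \<in> K \<and> T \<subseteq> K \<times> alphabet Moutp Minp \<times> K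
     \<and> (\<forall>p\<in>K. send_state T p \<or> receive_state T p)
     \<and> (\<forall>p\<in>K. \<forall>q\<in>K. \<exists>w. path T p w q)
     \<and> (\<forall>p e q1 q2. (p, e, q1) \<in> T \<longrightarrow> (p, e, q2) \<in> T \<longrightarrow> q1 = q2)"

text \<open>Pair of communicating SR-machines: F0 sends on alpha (messages M_alpha) and receives on beta.\<close>
definition sr_pair ::
  "'m set \<Rightarrow> 'm set \<Rightarrow> 's0 set \<Rightarrow> ('s0 \<times> 'm act \<times> 's0) set \<Rightarrow> 's0
   \<Rightarrow> 's1 set \<Rightarrow> ('s1 \<times> 'm act \<times> 's1) set \<Rightarrow> 's1 \<Rightarrow> bool" where
  "sr_pair Ma Mb K0 T0 h0 K1 T1 h1 \<longleftrightarrow>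
     finite Ma \<and> finite Mb \<and> Ma \<inter> Mb = {}
     \<and> sr_machine Ma Mb K0 T0 h0 \<and> sr_machine Mb Ma K1 T1 h1"

definition proj :: "'m set \<Rightarrow> 'm act list \<Rightarrow> 'm list" where
  "proj M w = [msg e. e \<leftarrow> w, msg e \<in> M]"

definition Zset :: "'m set \<Rightarrow> 'm set \<Rightarrow> ('s \<times> 'm act \<times> 's) set \<Rightarrow> 's \<Rightarrow> ('m list \<times> 'm list) set" where
  "Zset Ma Mb T h = {(proj Ma w, proj Mb w) | w. path T h w h}"

definition affine ::
  "'m set \<Rightarrow> 'm set \<Rightarrow> ('s0 \<times> 'm act \<times> 's0) set \<Rightarrow> 's0 \<Rightarrow> ('s1 \<times> 'm act \<times> 's1) set \<Rightarrow> 's1 \<Rightarrow> bool" where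
  "affine Ma Mb T0 h0 T1 h1 \<longleftrightarrow> Zset Ma Mb T0 h0 = Zset Ma Mb T1 h1"

inductive reachable ::
  "('s0 \<times> 'm act \<times> 's0) set \<Rightarrow> 's0 \<Rightarrow> ('s1 \<times> 'm act \<times> 's1) set \<Rightarrow> 's1
   \<Rightarrow> ('s0 \<times> 's1) \<times> ('m list \<times> 'm list) \<Rightarrow> bool"
  for T0 h0 T1 h1 where
  init: "reachable T0 h0 T1 h1 ((h0, h1), ([], []))"
| send0: "reachable T0 h0 T1 h1 ((p0, p1), (xa, xb)) \<Longrightarrow> (p0, Snd b, q) \<in> T0 \<Longrightarrow>
          reachable T0 h0 T1 h1 ((q, p1), (xa @ [b], xb))"
| recv0: "reachable T0 h0 T1 h1 ((p0, p1), (xa, b # xb)) \<Longrightarrow> (p0, Rcv b, q) \<in> T0 \<Longrightarrow>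
          reachable T0 h0 T1 h1 ((q, p1), (xa, xb))"
| send1: "reachable T0 h0 T1 h1 ((p0, p1), (xa, xb)) \<Longrightarrow> (p1, Snd b, q) \<in> T1 \<Longrightarrow>
          reachable T0 h0 T1 h1 ((p0, q), (xa, xb @ [b]))"
| recv1: "reachable T0 h0 T1 h1 ((p0, p1), (b # xa, xb)) \<Longrightarrow> (p1, Rcv b, q) \<in> T1 \<Longrightarrow>
          reachable T0 h0 T1 h1 ((p0, q), (xa, xb))"

definition has_send_cycle :: "('s \<times> 'm act \<times> 's) set \<Rightarrow> bool" where
  "has_send_cycle T \<longleftrightarrow> (\<exists>p w. w \<noteq> [] \<and> path T p w p \<and> (\<forall>e\<in>set w. is_send e))"

definition has_receive_cycle :: "('s \<times> 'm act \<times> 's) set \<Rightarrow> bool" where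
  "has_receive_cycle T \<longleftrightarrow> (\<exists>p w. w \<noteq> [] \<and> path T p w p \<and> (\<forall>e\<in>set w. is_recv e))"

end

theory Submission
  imports Defs "HOL-Library.Sublist"
begin

text \<open>
  Pigeonhole in a finite transition diagram: a path carrying more than \<open>(n + 1)(|K| - 1)\<close>
  labels of one kind but only \<open>n\<close> of the other contains \<open>|K|\<close> consecutive labels of the
  first kind, hence a cycle all of whose labels are of that kind.

  From the reachable state, \<open>F\<^sub>0\<close> can return home in fewer than \<open>k\<^sub>0\<close> steps. By
  affinity the resulting closed path of \<open>F\<^sub>0\<close> has a counterpart in \<open>F\<^sub>1\<close> with the same
  projections, and since an SR-machine is deterministic and never offers a send and a receive
  at the same state, that counterpart extends the history of \<open>F\<^sub>1\<close>. So from \<open>p\<^sub>1\<close> the machine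
  \<open>F\<^sub>1\<close> can receive all of \<open>x\<^sub>\<alpha>\<close> while sending fewer than \<open>k\<^sub>0\<close> messages, which forces a
  receive cycle. Pumping that cycle gives closed paths of \<open>F\<^sub>1\<close> with arbitrarily many receives
  and boundedly many sends; by affinity \<open>F\<^sub>0\<close> has closed paths with arbitrarily many sends and
  boundedly many receives, which forces a send cycle.
\<close>

lemma path_Nil_iff [simp]: "path T p [] q \<longleftrightarrow> p = q"
  by (auto elim: path.cases intro: path.intros)

lemma path_Cons_iff [simp]: "path T p (e # w) r \<longleftrightarrow> (\<exists>q. (p, e, q) \<in> T \<and> path T q w r)"
  by (auto elim: path.cases intro: path.intros)

lemma path_append_iff: "path T p (u @ v) r \<longleftrightarrow> (\<exists>q. path T p u q \<and> path T q v r)"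
  by (induction u arbitrary: p) auto

lemma path_snoc_iff: "path T p (w @ [e]) r \<longleftrightarrow> (\<exists>q. path T p w q \<and> (q, e, r) \<in> T)"
  by (simp add: path_append_iff)

lemma path_concat_replicate: "path T p c p \<Longrightarrow> path T p (concat (replicate n c)) p"
  by (induction n) (auto simp: path_append_iff)

lemma path_end_in: "path T p w q \<Longrightarrow> T \<subseteq> K \<times> UNIV \<times> K \<Longrightarrow> p \<in> K \<Longrightarrow> q \<in> K"
  by (induction rule: path.induct) auto

lemma path_labels_subset: "path T p w q \<Longrightarrow> T \<subseteq> UNIV \<times> S \<times> UNIV \<Longrightarrow> set w \<subseteq> S"
  by (induction rule: path.induct) auto

lemma path_has_cycle_or_many_states:
  assumes "path T p w q"
  shows "(\<exists>u c v r. w = u @ c @ v \<and> c \<noteq> [] \<and> path T p u r \<and> path T r c r \<and> path T r v q)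
    \<or> (\<exists>A. finite A \<and> card A = Suc (length w)
          \<and> (\<forall>a\<in>A. \<exists>u v. w = u @ v \<and> path T p u a \<and> path T a v q))"
  using assms
proof (induction rule: path.induct)
  case (path_nil p)
  then show ?case by (intro disjI2 exI[of _ "{p}"]) auto
next
  case (path_cons p e q w r)
  from path_cons.IH show ?case
  proof (elim disjE exE conjE)
    fix u c v s
    assume "w = u @ c @ v" "c \<noteq> []" "path T q u s" "path T s c s" "path T s v r"
    then show ?case using path_cons.hyps(1)
      by (intro disjI1 exI[of _ "e # u"] exI[of _ c] exI[of _ v] exI[of _ s]) auto
  next
    fix A
    assume A: "finite A" "card A = Suc (length w)"
      and through: "\<forall>a\<in>A. \<exists>u v. w = u @ v \<and> path T q u a \<and> path T a v r"
    show ?case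
    proof (cases "p \<in> A")
      case True
      then obtain u v where "w = u @ v" "path T q u p" "path T p v r"
        using through by blast
      then show ?thesis using path_cons.hyps(1)
        by (intro disjI1 exI[of _ "[]"] exI[of _ "e # u"] exI[of _ v] exI[of _ p]) auto
    next
      case False
      have "\<exists>u v. e # w = u @ v \<and> path T p u a \<and> path T a v r" if "a \<in> insert p A" for a
      proof (cases "a = p")
        case True
        have "path T p (e # w) r" using path_cons.hyps by (rule path.path_cons)
        then show ?thesis using True by (intro exI[of _ "[]"] exI[of _ "e # w"]) simp
      next
        case False
        with that have "a \<in> A" by simp
        then obtain u v where "w = u @ v" "path T q u a" "path T a v r"
          using through by blast
        then show ?thesis using path_cons.hyps(1) by (intro exI[of _ "e # u"] exI[of _ v]) auto
      qed
      then show ?thesis using A False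
        by (intro disjI2 exI[of _ "insert p A"]) auto
    qed
  qed
qed

lemma path_decompose_cycle:
  assumes "path T p w q" "finite K" "T \<subseteq> K \<times> UNIV \<times> K" "p \<in> K" "card K \<le> length w"
  shows "\<exists>u c v r. w = u @ c @ v \<and> c \<noteq> [] \<and> path T p u r \<and> path T r c r \<and> path T r v q"
proof -
  consider (cycle)
      "\<exists>u c v r. w = u @ c @ v \<and> c \<noteq> [] \<and> path T p u r \<and> path T r c r \<and> path T r v q"
    | (states) A where "finite A" "card A = Suc (length w)"
        "\<forall>a\<in>A. \<exists>u v. w = u @ v \<and> path T p u a \<and> path T a v q"
    using path_has_cycle_or_many_states[OF assms(1)] by blast
  then show ?thesis
  proof cases
    case cycle
    then show ?thesis .
  next
    case states
    then have "A \<subseteq> K" using path_end_in[OF _ assms(3,4)] by blast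
    with assms(2) have "card A \<le> card K" by (rule card_mono)
    with states(2) assms(5) show ?thesis by simp
  qed
qed

lemma path_shorten:
  assumes "path T p w q" "finite K" "T \<subseteq> K \<times> UNIV \<times> K" "p \<in> K"
  shows "\<exists>w'. path T p w' q \<and> length w' < card K"
  using assms(1)
proof (induction "length w" arbitrary: w rule: less_induct)
  case less
  show ?case
  proof (cases "length w < card K")
    case True
    then show ?thesis using less.prems by blast
  next
    case False
    then obtain u c v r where "w = u @ c @ v" "c \<noteq> []" "path T p u r" "path T r v q"
      using path_decompose_cycle[OF less.prems assms(2-4)] by auto
    then show ?thesis using less.hyps[of "u @ v"] by (auto simp: path_append_iff)
  qed
qed

lemma list_has_long_run:
  "(length (filter (\<lambda>e. \<not> P e) w) + 1) * k < length (filter P w)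
    \<Longrightarrow> \<exists>u v x. w = u @ v @ x \<and> k < length v \<and> (\<forall>e\<in>set v. P e)"
proof (induction "length w" arbitrary: w rule: less_induct)
  case less
  define t where "t = takeWhile P w"
  define rest where "rest = dropWhile P w"
  have w: "w = t @ rest" and t: "\<forall>e\<in>set t. P e"
    by (auto simp: t_def rest_def dest: set_takeWhileD)
  show ?case
  proof (cases "k < length t")
    case True
    then show ?thesis using w t by (intro exI[of _ "[]"] exI[of _ t] exI[of _ rest]) auto
  next
    case False
    show ?thesis
    proof (cases rest)
      case Nil
      then have "length (filter P w) \<le> k" using False w t by (simp add: filter_id_conv)
      then show ?thesis using less.prems by (simp add: algebra_simps)
    next
      case (Cons e rest')
      have "\<not> P e" using Cons hd_dropWhile[of P w] by (simp add: rest_def)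
      then have "(length (filter (\<lambda>e. \<not> P e) rest') + 1) * k < length (filter P rest')"
        using less.prems False w t Cons by (simp add: filter_id_conv algebra_simps)
      moreover have "length rest' < length w" using w Cons by simp
      ultimately obtain u v x where "rest' = u @ v @ x" "k < length v" "\<forall>e\<in>set v. P e"
        using less.hyps by blast
      then show ?thesis using w Cons by (intro exI[of _ "t @ e # u"] exI[of _ v] exI[of _ x]) auto
    qed
  qed
qed

lemma path_has_uniform_cycle:
  assumes "path T p w q" "finite K" "T \<subseteq> K \<times> UNIV \<times> K" "p \<in> K"
    and "(length (filter (\<lambda>e. \<not> P e) w) + 1) * (card K - 1) < length (filter P w)"
  shows "\<exists>r c. c \<noteq> [] \<and> path T r c r \<and> (\<forall>e\<in>set c. P e)"
proof -
  obtain u v x where uvx: "w = u @ v @ x" "card K - 1 < length v" "\<forall>e\<in>set v. P e"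
    using list_has_long_run[OF assms(5)] by blast
  then obtain s t where "path T p u s" "path T s v t"
    using assms(1) by (auto simp: path_append_iff)
  moreover have "s \<in> K" using path_end_in[OF \<open>path T p u s\<close> assms(3,4)] .
  moreover have "card K \<le> length v" using uvx(2) by simp
  ultimately obtain v1 c v2 r where "v = v1 @ c @ v2" "c \<noteq> []" "path T r c r"
    using path_decompose_cycle[OF _ assms(2,3)] by meson
  then show ?thesis using uvx(3) by auto
qed

lemma Snd_in_alphabet [simp]: "Snd b \<in> alphabet Mo Mi \<longleftrightarrow> b \<in> Mo"
  by (auto simp: alphabet_def)

lemma Rcv_in_alphabet [simp]: "Rcv b \<in> alphabet Mo Mi \<longleftrightarrow> b \<in> Mi"
  by (auto simp: alphabet_def)

lemma not_is_recv [simp]: "\<not> is_recv e \<longleftrightarrow> is_send e"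
  by (cases e) auto

lemma not_is_send [simp]: "\<not> is_send e \<longleftrightarrow> is_recv e"
  by (cases e) auto

lemma proj_Nil [simp]: "proj M [] = []"
  by (simp add: proj_def)

lemma proj_Cons [simp]: "proj M (e # w) = (if msg e \<in> M then msg e # proj M w else proj M w)"
  by (simp add: proj_def)

lemma proj_append [simp]: "proj M (u @ v) = proj M u @ proj M v"
  by (simp add: proj_def)

lemma msg_in_alphabet_iff:
  assumes "e \<in> alphabet Mo Mi" "Mo \<inter> Mi = {}"
  shows "msg e \<in> Mo \<longleftrightarrow> is_send e" and "msg e \<in> Mi \<longleftrightarrow> is_recv e"
  using assms by (cases e; auto)+

lemma length_proj_le: "length (proj M w) \<le> length w"
  by (induction w) auto

lemma length_proj_sends:
  "set w \<subseteq> alphabet Mo Mi \<Longrightarrow> Mo \<inter> Mi = {} \<Longrightarrow> length (proj Mo w) = length (filter is_send w)"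
proof (induction w)
  case (Cons e w)
  then show ?case by (cases e) auto
qed simp

lemma length_proj_receives:
  "set w \<subseteq> alphabet Mo Mi \<Longrightarrow> Mo \<inter> Mi = {} \<Longrightarrow> length (proj Mi w) = length (filter is_recv w)"
proof (induction w)
  case (Cons e w)
  then show ?case by (cases e) auto
qed simp

lemma sr_machine_transitions: "sr_machine Mo Mi K T h \<Longrightarrow> T \<subseteq> K \<times> alphabet Mo Mi \<times> K"
  by (simp add: sr_machine_def)

lemma sr_machine_finite: "sr_machine Mo Mi K T h \<Longrightarrow> finite K"
  by (simp add: sr_machine_def)

lemma sr_machine_home_in: "sr_machine Mo Mi K T h \<Longrightarrow> h \<in> K"
  by (simp add: sr_machine_def)

lemma sr_machine_connected:
  "sr_machine Mo Mi K T h \<Longrightarrow> p \<in> K \<Longrightarrow> q \<in> K \<Longrightarrow> \<exists>w. path T p w q"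
  by (simp add: sr_machine_def)

lemma sr_machine_states:
  "sr_machine Mo Mi K T h \<Longrightarrow> T \<subseteq> K \<times> UNIV \<times> K"
  by (auto simp: sr_machine_def)

lemma sr_machine_path_end_in: "sr_machine Mo Mi K T h \<Longrightarrow> path T p w q \<Longrightarrow> p \<in> K \<Longrightarrow> q \<in> K"
  using path_end_in[of T p w q K] sr_machine_transitions[of Mo Mi K T h] by blast

lemma sr_machine_label_in_alphabet:
  "sr_machine Mo Mi K T h \<Longrightarrow> (p, e, q) \<in> T \<Longrightarrow> e \<in> alphabet Mo Mi"
  by (auto simp: sr_machine_def)

lemma sr_machine_path_labels:
  assumes "sr_machine Mo Mi K T h" "path T p w q"
  shows "set w \<subseteq> alphabet Mo Mi"
proof -
  have "T \<subseteq> UNIV \<times> alphabet Mo Mi \<times> UNIV"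
    using sr_machine_transitions[OF assms(1)] by auto
  with assms(2) show ?thesis by (rule path_labels_subset)
qed

lemma sr_machine_outgoing_same_kind:
  assumes "sr_machine Mo Mi K T h" "(p, e, q) \<in> T" "(p, e', q') \<in> T"
  shows "is_send e \<longleftrightarrow> is_send e'"
proof -
  have "p \<in> K" using sr_machine_transitions[OF assms(1)] assms(2) by blast
  then have "send_state T p \<or> receive_state T p" using assms(1) unfolding sr_machine_def by blast
  then show ?thesis using assms(2,3) unfolding send_state_def receive_state_def
    by (cases e; cases e') auto
qed

lemma sr_path_prefix:
  assumes "sr_machine Mo Mi K T h" "Mo \<inter> Mi = {}"
    and "path T p u r" "path T p d s"
    and "prefix (proj Mo u) (proj Mo d)" "prefix (proj Mi u) (proj Mi d)"
  shows "\<exists>d'. d = u @ d' \<and> path T r d' s"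
  using assms(3-6)
proof (induction arbitrary: d rule: path.induct)
  case (path_nil p)
  then show ?case by simp
next
  case (path_cons p e q u r)
  have e: "e \<in> alphabet Mo Mi"
    using path_cons.hyps(1) sr_machine_transitions[OF assms(1)] by blast
  then have "proj Mo (e # u) \<noteq> [] \<or> proj Mi (e # u) \<noteq> []"
    using msg_in_alphabet_iff[OF e assms(2)] by (cases e) auto
  then obtain e' d1 q' where d: "d = e' # d1" "(p, e', q') \<in> T" "path T q' d1 s"
    using path_cons.prems by (cases d) auto
  have e': "e' \<in> alphabet Mo Mi"
    using d(2) sr_machine_transitions[OF assms(1)] by blast
  have same_kind: "is_send e \<longleftrightarrow> is_send e'"
    using sr_machine_outgoing_same_kind[OF assms(1) path_cons.hyps(1) d(2)] .
  have "msg e = msg e'"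
    using path_cons.prems(2,3) same_kind d(1)
      msg_in_alphabet_iff[OF e assms(2)] msg_in_alphabet_iff[OF e' assms(2)]
    by (cases "is_send e") auto
  with same_kind have "e' = e" by (cases e; cases e') auto
  moreover have "q' = q"
    using assms(1) path_cons.hyps(1) d(2) \<open>e' = e\<close> by (auto simp: sr_machine_def)
  ultimately obtain d' where "d1 = u @ d'" "path T r d' s"
    using path_cons.IH[of d1] path_cons.prems(2,3) d by (auto split: if_splits)
  then show ?case using d(1) \<open>e' = e\<close> by simp
qed

lemma sr_pairD:
  assumes "sr_pair Ma Mb K0 T0 h0 K1 T1 h1"
  shows "sr_machine Ma Mb K0 T0 h0" "sr_machine Mb Ma K1 T1 h1" "Ma \<inter> Mb = {}"
  using assms by (auto simp: sr_pair_def)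

lemma Zset_eq_closed_path:
  assumes "Zset Ma Mb T h = Zset Ma Mb T' h'" "path T h w h"
  shows "\<exists>w'. path T' h' w' h' \<and> proj Ma w' = proj Ma w \<and> proj Mb w' = proj Mb w"
proof -
  have "(proj Ma w, proj Mb w) \<in> Zset Ma Mb T' h'"
    using assms unfolding Zset_def by blast
  then show ?thesis unfolding Zset_def by auto
qed

lemma cycle_pumping:
  assumes "T \<subseteq> K \<times> UNIV \<times> K" "\<forall>p\<in>K. \<forall>q\<in>K. \<exists>w. path T p w q" "h \<in> K"
    and "c \<noteq> []" "path T r c r" "\<forall>e\<in>set c. P e"
  shows "\<exists>m. \<forall>N. \<exists>w. path T h w h \<and> N \<le> length (filter P w)
           \<and> length (filter (\<lambda>e. \<not> P e) w) \<le> m"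
proof -
  have "r \<in> K" using assms(1,4,5) by (cases c) auto
  then obtain u v where u: "path T h u r" and v: "path T r v h"
    using assms(2,3) by blast
  define m where "m = length (filter (\<lambda>e. \<not> P e) (u @ v))"
  have "\<exists>w. path T h w h \<and> N \<le> length (filter P w)
      \<and> length (filter (\<lambda>e. \<not> P e) w) \<le> m" for N
  proof (intro exI conjI)
    let ?w = "u @ concat (replicate N c) @ v"
    show "path T h ?w h"
      using u v path_concat_replicate[OF assms(5)] by (auto simp: path_append_iff)
    have "filter P (concat (replicate N c)) = concat (replicate N c)"
      using assms(6) by (simp add: filter_id_conv)
    moreover have "N \<le> length (concat (replicate N c))"
      using assms(4) by (simp add: length_concat sum_list_replicate Suc_le_eq)
    ultimately show "N \<le> length (filter P ?w)" by simp
    show "length (filter (\<lambda>e. \<not> P e) ?w) \<le> m"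
      using assms(6) by (simp add: m_def filter_empty_conv)
  qed
  then show ?thesis by blast
qed

context
  fixes Ma Mb :: "'m set"
    and K0 :: "'s0 set" and T0 :: "('s0 \<times> 'm act \<times> 's0) set" and h0 :: 's0
    and K1 :: "'s1 set" and T1 :: "('s1 \<times> 'm act \<times> 's1) set" and h1 :: 's1
  assumes pair: "sr_pair Ma Mb K0 T0 h0 K1 T1 h1"
begin

lemma reachable_paths:
  assumes "reachable T0 h0 T1 h1 ((p0, p1), (xa, xb))"
  shows "\<exists>w0 w1. path T0 h0 w0 p0 \<and> path T1 h1 w1 p1
           \<and> proj Ma w0 = proj Ma w1 @ xa \<and> proj Mb w1 = proj Mb w0 @ xb"
  using assms
proof (induction "((p0, p1), (xa, xb))" arbitrary: p0 p1 xa xb rule: reachable.induct)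
  case init
  then show ?case by (intro exI[of _ "[]"]) simp
next
  case (send0 p0 p1 xa xb b q)
  then obtain w0 w1 where w: "path T0 h0 w0 p0" "path T1 h1 w1 p1"
    "proj Ma w0 = proj Ma w1 @ xa" "proj Mb w1 = proj Mb w0 @ xb" by blast
  have "b \<in> Ma" "b \<notin> Mb"
    using sr_machine_label_in_alphabet[OF sr_pairD(1)[OF pair] \<open>(p0, Snd b, q) \<in> T0\<close>]
      sr_pairD(3)[OF pair] by auto
  with w \<open>(p0, Snd b, q) \<in> T0\<close> show ?case
    by (intro exI[of _ "w0 @ [Snd b]"] exI[of _ w1]) (auto simp: path_snoc_iff)
next
  case (recv0 p0 p1 xa b xb q)
  then obtain w0 w1 where w: "path T0 h0 w0 p0" "path T1 h1 w1 p1"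
    "proj Ma w0 = proj Ma w1 @ xa" "proj Mb w1 = proj Mb w0 @ b # xb" by blast
  have "b \<in> Mb" "b \<notin> Ma"
    using sr_machine_label_in_alphabet[OF sr_pairD(1)[OF pair] \<open>(p0, Rcv b, q) \<in> T0\<close>]
      sr_pairD(3)[OF pair] by auto
  with w \<open>(p0, Rcv b, q) \<in> T0\<close> show ?case
    by (intro exI[of _ "w0 @ [Rcv b]"] exI[of _ w1]) (auto simp: path_snoc_iff)
next
  case (send1 p0 p1 xa xb b q)
  then obtain w0 w1 where w: "path T0 h0 w0 p0" "path T1 h1 w1 p1"
    "proj Ma w0 = proj Ma w1 @ xa" "proj Mb w1 = proj Mb w0 @ xb" by blast
  have "b \<in> Mb" "b \<notin> Ma"
    using sr_machine_label_in_alphabet[OF sr_pairD(2)[OF pair] \<open>(p1, Snd b, q) \<in> T1\<close>]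
      sr_pairD(3)[OF pair] by auto
  with w \<open>(p1, Snd b, q) \<in> T1\<close> show ?case
    by (intro exI[of _ w0] exI[of _ "w1 @ [Snd b]"]) (auto simp: path_snoc_iff)
next
  case (recv1 p0 p1 b xa xb q)
  then obtain w0 w1 where w: "path T0 h0 w0 p0" "path T1 h1 w1 p1"
    "proj Ma w0 = proj Ma w1 @ b # xa" "proj Mb w1 = proj Mb w0 @ xb" by blast
  have "b \<in> Ma" "b \<notin> Mb"
    using sr_machine_label_in_alphabet[OF sr_pairD(2)[OF pair] \<open>(p1, Rcv b, q) \<in> T1\<close>]
      sr_pairD(3)[OF pair] by auto
  with w \<open>(p1, Rcv b, q) \<in> T1\<close> show ?case
    by (intro exI[of _ w0] exI[of _ "w1 @ [Rcv b]"]) (auto simp: path_snoc_iff)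
qed

lemma reachable_states_in:
  assumes "reachable T0 h0 T1 h1 ((p0, p1), (xa, xb))"
  shows "p0 \<in> K0" "p1 \<in> K1"
proof -
  obtain w0 w1 where "path T0 h0 w0 p0" "path T1 h1 w1 p1"
    using reachable_paths[OF assms] by blast
  with sr_pairD(1,2)[OF pair] show "p0 \<in> K0" "p1 \<in> K1"
    by (auto intro: sr_machine_path_end_in sr_machine_home_in)
qed

lemma reachable_return_path:
  assumes "affine Ma Mb T0 h0 T1 h1"
    and reach: "reachable T0 h0 T1 h1 ((p0, p1), (xa, []))"
  shows "\<exists>d. path T1 p1 d h1 \<and> length xa \<le> length (filter is_recv d)
           \<and> length (filter is_send d) < card K0"
proof -
  note sr0 = sr_pairD(1)[OF pair] and sr1 = sr_pairD(2)[OF pair]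
  have disj: "Mb \<inter> Ma = {}" using sr_pairD(3)[OF pair] by blast
  obtain w0 w1 where w0: "path T0 h0 w0 p0" and w1: "path T1 h1 w1 p1"
    and chan: "proj Ma w0 = proj Ma w1 @ xa" "proj Mb w1 = proj Mb w0"
    using reachable_paths[OF reach] by auto
  have p0: "p0 \<in> K0" using reachable_states_in(1)[OF reach] .
  obtain v where "path T0 p0 v h0"
    using sr_machine_connected[OF sr0 p0 sr_machine_home_in[OF sr0]] by blast
  then obtain v0 where v0: "path T0 p0 v0 h0" "length v0 < card K0"
    using path_shorten[OF _ sr_machine_finite[OF sr0] sr_machine_states[OF sr0] p0] by blast
  have "path T0 h0 (w0 @ v0) h0" using w0 v0(1) by (auto simp: path_append_iff)
  with assms(1) obtain d where d: "path T1 h1 d h1"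
    "proj Ma d = proj Ma (w0 @ v0)" "proj Mb d = proj Mb (w0 @ v0)"
    unfolding affine_def by (auto dest: Zset_eq_closed_path)
  then have d_chan:
      "proj Ma d = proj Ma w1 @ xa @ proj Ma v0" "proj Mb d = proj Mb w1 @ proj Mb v0"
    using chan by simp_all
  then have "prefix (proj Mb w1) (proj Mb d)" "prefix (proj Ma w1) (proj Ma d)"
    by (metis prefixI)+
  then obtain d' where d': "d = w1 @ d'" "path T1 p1 d' h1"
    using sr_path_prefix[OF sr1 disj w1 d(1)] by blast
  have labels: "set d' \<subseteq> alphabet Mb Ma" using sr_machine_path_labels[OF sr1 d'(2)] .
  have "proj Ma d' = xa @ proj Ma v0" "proj Mb d' = proj Mb v0"
    using d_chan d'(1) by simp_all
  then have "length (filter is_recv d') = length xa + length (proj Ma v0)"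
    and "length (filter is_send d') = length (proj Mb v0)"
    using length_proj_sends[OF labels disj] length_proj_receives[OF labels disj] by simp_all
  moreover have "length (proj Mb v0) < card K0" using length_proj_le[of Mb v0] v0(2) by simp
  ultimately show ?thesis using d'(2) by auto
qed

lemma long_channel_receive_cycle:
  assumes "affine Ma Mb T0 h0 T1 h1"
    and reach: "reachable T0 h0 T1 h1 ((p0, p1), (xa, []))"
    and long: "card K0 * (card K1 - 1) < length xa"
  shows "has_receive_cycle T1"
proof -
  note sr1 = sr_pairD(2)[OF pair]
  obtain d where d: "path T1 p1 d h1" "length xa \<le> length (filter is_recv d)"
    "length (filter is_send d) < card K0"
    using reachable_return_path[OF assms(1) reach] by blast
  have "(length (filter is_send d) + 1) * (card K1 - 1) \<le> card K0 * (card K1 - 1)"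
    using d(3) by (intro mult_le_mono1) simp
  with long d(2) have "(length (filter is_send d) + 1) * (card K1 - 1) < length (filter is_recv d)"
    by linarith
  then have "(length (filter (\<lambda>e. \<not> is_recv e) d) + 1) * (card K1 - 1)
      < length (filter is_recv d)"
    by simp
  with path_has_uniform_cycle[OF d(1) sr_machine_finite[OF sr1] sr_machine_states[OF sr1]
      reachable_states_in(2)[OF reach]]
  show ?thesis unfolding has_receive_cycle_def by blast
qed

lemma receive_cycle_send_cycle:
  assumes "affine Ma Mb T0 h0 T1 h1"
    and "has_receive_cycle T1"
  shows "has_send_cycle T0"
proof -
  note sr0 = sr_pairD(1)[OF pair] and sr1 = sr_pairD(2)[OF pair]
  have disj: "Ma \<inter> Mb = {}" "Mb \<inter> Ma = {}" using sr_pairD(3)[OF pair] by blast+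
  obtain r c where "c \<noteq> []" "path T1 r c r" "\<forall>e\<in>set c. is_recv e"
    using assms(2) unfolding has_receive_cycle_def by blast
  then obtain m where pump: "\<And>N. \<exists>w. path T1 h1 w h1 \<and> N \<le> length (filter is_recv w)
      \<and> length (filter (\<lambda>e. \<not> is_recv e) w) \<le> m"
    using cycle_pumping[OF sr_machine_states[OF sr1] _ sr_machine_home_in[OF sr1]]
      sr_machine_connected[OF sr1] by metis
  define N where "N = Suc ((m + 1) * (card K0 - 1))"
  obtain w1 where w1: "path T1 h1 w1 h1" "N \<le> length (filter is_recv w1)"
    "length (filter is_send w1) \<le> m"
    using pump[of N] by auto
  from assms(1) w1(1) obtain w0 where w0: "path T0 h0 w0 h0"
    "proj Ma w0 = proj Ma w1" "proj Mb w0 = proj Mb w1"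
    unfolding affine_def by (auto dest: Zset_eq_closed_path[OF sym])
  note labels0 = sr_machine_path_labels[OF sr0 w0(1)]
    and labels1 = sr_machine_path_labels[OF sr1 w1(1)]
  have "length (filter is_send w0) = length (filter is_recv w1)"
    using w0(2) length_proj_sends[OF labels0 disj(1)] length_proj_receives[OF labels1 disj(2)]
    by simp
  moreover have "length (filter is_recv w0) = length (filter is_send w1)"
    using w0(3) length_proj_receives[OF labels0 disj(1)] length_proj_sends[OF labels1 disj(2)]
    by simp
  then have "(length (filter is_recv w0) + 1) * (card K0 - 1) \<le> (m + 1) * (card K0 - 1)"
    using w1(3) by (intro mult_le_mono1) simp
  ultimately have "(length (filter is_recv w0) + 1) * (card K0 - 1) < length (filter is_send w0)"
    using w1(2) unfolding N_def by linarith
  then have "(length (filter (\<lambda>e. \<not> is_send e) w0) + 1) * (card K0 - 1)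
      < length (filter is_send w0)"
    by simp
  with path_has_uniform_cycle[OF w0(1) sr_machine_finite[OF sr0] sr_machine_states[OF sr0]
      sr_machine_home_in[OF sr0]]
  show ?thesis unfolding has_send_cycle_def by blast
qed

end

theorem lemma6p2:
  fixes Ma Mb :: "'m set"
    and K0 :: "'s0 set" and T0 :: "('s0 \<times> 'm act \<times> 's0) set" and h0 :: 's0
    and K1 :: "'s1 set" and T1 :: "('s1 \<times> 'm act \<times> 's1) set" and h1 :: 's1
  assumes "sr_pair Ma Mb K0 T0 h0 K1 T1 h1"
    and "affine Ma Mb T0 h0 T1 h1"
    and "reachable T0 h0 T1 h1 ((p0, p1), (xa, []))"
    and "length xa \<ge> card K0 * (card K1 - 1) + 1"
  shows "has_receive_cycle T1 \<and> has_send_cycle T0"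
proof
  show "has_receive_cycle T1"
    using long_channel_receive_cycle[OF assms(1-3)] assms(4) by simp
  then show "has_send_cycle T0"
    by (rule receive_cycle_send_cycle[OF assms(1,2)])
qed

end
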